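(* Let $d$ be a positive integer and let $\mu,\nu,\rho$ be $d$-partitions with $\mu\prec\rho\succ\nu$. Then there exist a unique $d$-partition $\kappa$ and a unique nonnegative integer $m$ such that the cell with entry $m$ and bottom-left, top-left, bottom-right, top-right corners $\kappa,\mu,\nu,\rho$ satisfies the $d$-RSK local rule.
   Context: Partitions: finite weakly decreasing sequences of positive integers, $\lambda_i=0$ for $i>\ell(\lambda)$; $d$-partitions have $\ell\le d$; $\alpha\prec\beta$ (also $\beta\succ\alpha$) means $\beta_1\ge\alpha_1\ge\beta_2\ge\alpha_2\ge\cdots$. The $d$-RSK local rule for a cell with entry $m$ and corners $\kappa$ (bottom-left), $\mu$ (top-left), $\nu$ (bottom-right), $\rho$ (top-right) requires: all four are $d$-partitions, $\mu\succ\kappa\prec\nu$, $\mu\prec\rho\succ\nu$, $m=0$ or $\kappa_d=0$, $\rho_1+\kappa_d=m+\min(\mu_d,\nu_d)+\max(\mu_1,\nu_1)$, and $\rho_i+\kappa_{i-1}=\min(\mu_{i-1},\nu_{i-1})+\max(\mu_i,\nu_i)$ for $2\le i\le d$. *)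

theory Defs
  imports Main
begin

definition is_partition :: "nat list \<Rightarrow> bool" where
  "is_partition la \<longleftrightarrow> sorted_wrt (\<ge>) la \<and> 0 \<notin> set la"

text \<open>The i-th part (1-indexed), zero for i = 0 or i > length.\<close>
definition part :: "nat list \<Rightarrow> nat \<Rightarrow> nat" where
  "part la i = (if 1 \<le> i \<and> i \<le> length la then la ! (i - 1) else 0)"

definition d_partition :: "nat \<Rightarrow> nat list \<Rightarrow> bool" where
  "d_partition d la \<longleftrightarrow> is_partition la \<and> length la \<le> d"

text \<open>interlaces al be means al \<prec> be:  be_1 >= al_1 >= be_2 >= al_2 >= ...\<close>
definition interlaces :: "nat list \<Rightarrow> nat list \<Rightarrow> bool" where
  "interlaces al be \<longleftrightarrow> (\<forall>i\<ge>1. part al i \<le> part be i \<and> part be (i + 1) \<le> part al i)"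

text \<open>d-RSK local rule for a cell with entry m and corners
  ka (bottom-left), mu (top-left), nu (bottom-right), rho (top-right).\<close>
definition rsk_local ::
  "nat \<Rightarrow> nat \<Rightarrow> nat list \<Rightarrow> nat list \<Rightarrow> nat list \<Rightarrow> nat list \<Rightarrow> bool" where
  "rsk_local d m ka mu nu rho \<longleftrightarrow>
     d_partition d ka \<and> d_partition d mu \<and> d_partition d nu \<and> d_partition d rho \<and>
     interlaces ka mu \<and> interlaces ka nu \<and>
     interlaces mu rho \<and> interlaces nu rho \<and>
     (m = 0 \<or> part ka d = 0) \<and>
     part rho 1 + part ka d = m + min (part mu d) (part nu d) + max (part mu 1) (part nu 1) \<and>
     (\<forall>i. 2 \<le> i \<and> i \<le> d \<longrightarrow>
        part rho i + part ka (i - 1) =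
          min (part mu (i - 1)) (part nu (i - 1)) + max (part mu i) (part nu i))"

end

theory Submission
  imports Defs
begin

text \<open>For 2 \<le> i \<le> d the local rule is a linear equation with the single unknown
  \<open>\<kappa>\<^sub>i\<^sub>-\<^sub>1\<close>, and the first equation together with \<open>m = 0 \<or> \<kappa>\<^sub>d = 0\<close> splits
  \<open>\<rho>\<^sub>1 - min(\<mu>\<^sub>d,\<nu>\<^sub>d) - max(\<mu>\<^sub>1,\<nu>\<^sub>1)\<close> into its positive part \<open>m\<close> and its negative
  part \<open>\<kappa>\<^sub>d\<close>. So \<open>\<kappa>\<close> and \<open>m\<close> are forced. Conversely, the interlacings
  \<open>\<mu>,\<nu> \<prec> \<rho>\<close> give \<open>max(\<mu>\<^sub>j\<^sub>+\<^sub>1,\<nu>\<^sub>j\<^sub>+\<^sub>1) \<le> \<kappa>\<^sub>j \<le> min(\<mu>\<^sub>j,\<nu>\<^sub>j)\<close> for the forced values,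
  which says at once that \<open>\<kappa>\<close> is a partition and that \<open>\<kappa> \<prec> \<mu>\<close>, \<open>\<kappa> \<prec> \<nu>\<close>.\<close>

lemma part_0 [simp]: "part la 0 = 0"
  by (simp add: part_def)

lemma part_eq_0_if_length_less: "length la < i \<Longrightarrow> part la i = 0"
  by (simp add: part_def)

lemma d_partition_part_eq_0: "d_partition d la \<Longrightarrow> d < i \<Longrightarrow> part la i = 0"
  unfolding d_partition_def by (simp add: part_eq_0_if_length_less)

lemma part_pos:
  assumes "is_partition la" "1 \<le> i" "i \<le> length la"
  shows "0 < part la i"
proof -
  have "la ! (i - 1) \<in> set la"
    using assms(2,3) by simp
  then show ?thesis
    using assms unfolding is_partition_def part_def by (metis gr0I)
qed

lemma length_eq_if_part_eq:
  assumes "is_partition a" "is_partition b" "part a = part b"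
  shows "length a = length b"
proof -
  have "length a \<le> length b" if "is_partition a" "part a = part b" for a b
  proof (rule ccontr)
    assume "\<not> length a \<le> length b"
    then have "0 < part a (length a)" and "part b (length a) = 0"
      using part_pos[OF that(1)] part_eq_0_if_length_less by auto
    then show False
      using that(2) by simp
  qed
  then show ?thesis
    using assms by (metis le_antisym)
qed

lemma partition_eqI:
  assumes "is_partition a" "is_partition b" "part a = part b"
  shows "a = b"
proof (rule nth_equalityI)
  show len: "length a = length b"
    using length_eq_if_part_eq[OF assms] .
  show "a ! k = b ! k" if "k < length a" for k
    using fun_cong[OF assms(3), of "Suc k"] that len by (simp add: part_def)
qed

lemma interlacesD:
  assumes "interlaces al be" "1 \<le> i"
  shows "part al i \<le> part be i" and "part be (Suc i) \<le> part al i"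
  using assms unfolding interlaces_def by auto

lemma interlacesI:
  assumes "\<And>i. 1 \<le> i \<Longrightarrow> part al i \<le> part be i"
    and "\<And>i. 1 \<le> i \<Longrightarrow> part be (Suc i) \<le> part al i"
  shows "interlaces al be"
  using assms unfolding interlaces_def by simp

lemma ex_d_partition_part_eq:
  fixes f :: "nat \<Rightarrow> nat"
  assumes f0: "f 0 = 0" and f_vanish: "\<And>i. d < i \<Longrightarrow> f i = 0"
    and f_step: "\<And>i. 1 \<le> i \<Longrightarrow> f (Suc i) \<le> f i"
  shows "\<exists>la. d_partition d la \<and> part la = f"
proof -
  have f_antitone: "f j \<le> f i" if "1 \<le> i" "i \<le> j" for i j
    using lift_Suc_antimono_le[of "\<lambda>k. f (Suc k)" "i - 1" "j - 1"] f_step that by simp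
  define P where "P i \<longleftrightarrow> 1 \<le> i \<and> f i = 0" for i
  define n where "n = (LEAST i. P i) - 1"
  have "P (Suc d)"
    using f_vanish P_def by simp
  then have "P (LEAST i. P i)" and "(LEAST i. P i) \<le> Suc d"
    by (rule LeastI, rule Least_le)
  then have P_least: "P (n + 1)" and n_le: "n \<le> d"
    unfolding n_def P_def by auto
  have pos: "0 < f i" if "1 \<le> i" "i \<le> n" for i
    using not_less_Least[of i P] that P_least unfolding n_def P_def by auto
  have zero: "f i = 0" if "n < i" for i
    using f_antitone[of "n + 1" i] that P_least unfolding P_def by auto
  define la where "la = map f [1..<n + 1]"
  have len: "length la = n"
    by (simp add: la_def)
  have nth: "la ! k = f (Suc k)" if "k < n" for k
    using that by (simp add: la_def del: upt_Suc)
  have "sorted_wrt (\<ge>) la"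
    unfolding sorted_wrt_iff_nth_less using len nth f_antitone by auto
  moreover have "0 \<notin> set la"
    unfolding la_def using pos by (fastforce simp del: upt_Suc)
  moreover have "part la i = f i" for i
    using len nth pos zero f0 by (cases "i = 0") (auto simp: part_def)
  ultimately show ?thesis
    using n_le len unfolding d_partition_def is_partition_def by blast
qed

locale d_rsk_upper_corners =
  fixes d :: nat and mu nu rho :: "nat list"
  assumes d_pos: "1 \<le> d"
    and mu: "d_partition d mu" and nu: "d_partition d nu" and rho: "d_partition d rho"
    and mu_rho: "interlaces mu rho" and nu_rho: "interlaces nu rho"
begin

definition wrap_sum :: nat where
  "wrap_sum = min (part mu d) (part nu d) + max (part mu 1) (part nu 1)"

definition lower_part :: "nat \<Rightarrow> nat" where
  "lower_part j =
    (if 1 \<le> j \<and> j < d then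
       min (part mu j) (part nu j) + max (part mu (Suc j)) (part nu (Suc j)) - part rho (Suc j)
     else if j = d then wrap_sum - part rho 1
     else 0)"

definition entry :: nat where
  "entry = part rho 1 - wrap_sum"

lemma lower_part_le_min: "lower_part j \<le> min (part mu j) (part nu j)"
proof -
  have "max (part mu (Suc j)) (part nu (Suc j)) \<le> part rho (Suc j)"
    using interlacesD(1)[OF mu_rho] interlacesD(1)[OF nu_rho] by simp
  moreover have "max (part mu 1) (part nu 1) \<le> part rho 1"
    using interlacesD(1)[OF mu_rho] interlacesD(1)[OF nu_rho] by simp
  ultimately show ?thesis
    unfolding lower_part_def wrap_sum_def by auto
qed

lemma max_le_lower_part:
  assumes "1 \<le> j"
  shows "max (part mu (Suc j)) (part nu (Suc j)) \<le> lower_part j"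
proof (cases "j < d")
  case True
  have "part rho (Suc j) \<le> min (part mu j) (part nu j)"
    using interlacesD(2)[OF mu_rho assms] interlacesD(2)[OF nu_rho assms] by simp
  then show ?thesis
    using True assms unfolding lower_part_def by auto
next
  case False
  then show ?thesis
    using d_partition_part_eq_0[OF mu] d_partition_part_eq_0[OF nu] by simp
qed

lemma ex_lower_partition: "\<exists>ka. d_partition d ka \<and> part ka = lower_part"
proof (rule ex_d_partition_part_eq)
  show "lower_part 0 = 0" and "\<And>i. d < i \<Longrightarrow> lower_part i = 0"
    using d_pos by (auto simp: lower_part_def)
  show "lower_part (Suc i) \<le> lower_part i" if "1 \<le> i" for i
    using lower_part_le_min[of "Suc i"] max_le_lower_part[OF that] by linarith
qed

lemma rsk_local_lower_partition:
  assumes ka: "d_partition d ka" "part ka = lower_part"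
  shows "rsk_local d entry ka mu nu rho"
proof -
  have "interlaces ka mu" "interlaces ka nu"
    using lower_part_le_min max_le_lower_part
    by (auto intro!: interlacesI simp: ka(2))
  moreover have "entry = 0 \<or> lower_part d = 0"
    and "part rho 1 + lower_part d = entry + wrap_sum"
    using d_pos unfolding lower_part_def entry_def by auto
  moreover have "part rho i + lower_part (i - 1) =
      min (part mu (i - 1)) (part nu (i - 1)) + max (part mu i) (part nu i)"
    if "2 \<le> i" "i \<le> d" for i
  proof -
    have "part rho i \<le> min (part mu (i - 1)) (part nu (i - 1))"
      using interlacesD(2)[OF mu_rho, of "i - 1"] interlacesD(2)[OF nu_rho, of "i - 1"] that
      by simp
    then show ?thesis
      using that unfolding lower_part_def by auto
  qed
  ultimately show ?thesis
    unfolding rsk_local_def wrap_sum_def using ka mu nu rho mu_rho nu_rho by simp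
qed

lemma rsk_local_determined:
  assumes "rsk_local d m ka mu nu rho"
  shows "part ka = lower_part" and "m = entry"
proof -
  have ka: "d_partition d ka"
    and first_eq: "part rho 1 + part ka d = m + wrap_sum"
    and m_or_ka: "m = 0 \<or> part ka d = 0"
    and step_eq: "\<And>i. 2 \<le> i \<Longrightarrow> i \<le> d \<Longrightarrow> part rho i + part ka (i - 1) =
        min (part mu (i - 1)) (part nu (i - 1)) + max (part mu i) (part nu i)"
    using assms unfolding rsk_local_def wrap_sum_def by auto
  show "m = entry"
    using first_eq m_or_ka unfolding entry_def by auto
  have "part ka j = lower_part j" for j
  proof -
    consider "j = 0" | "1 \<le> j" "j < d" | "j = d" | "d < j"
      by linarith
    then show ?thesis
    proof cases
      case 2
      then show ?thesis
        using step_eq[of "Suc j"] unfolding lower_part_def by simp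
    next
      case 3
      then show ?thesis
        using first_eq m_or_ka d_pos unfolding lower_part_def by auto
    next
      case 4
      then show ?thesis
        using d_partition_part_eq_0[OF ka] unfolding lower_part_def by simp
    qed (use d_pos in \<open>simp add: lower_part_def\<close>)
  qed
  then show "part ka = lower_part" ..
qed

end

theorem lemma6p2:
  fixes d :: nat and mu nu rho :: "nat list"
  assumes "d \<ge> 1"
    and "d_partition d mu" and "d_partition d nu" and "d_partition d rho"
    and "interlaces mu rho" and "interlaces nu rho"
  shows "\<exists>!(ka, m). rsk_local d m ka mu nu rho"
proof -
  interpret d_rsk_upper_corners d mu nu rho
    using assms by unfold_locales
  obtain ka0 where ka0: "d_partition d ka0" "part ka0 = lower_part"
    using ex_lower_partition by blast
  show ?thesis
  proof (rule ex1I[of _ "(ka0, entry)"])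
    show "case (ka0, entry) of (ka, m) \<Rightarrow> rsk_local d m ka mu nu rho"
      using rsk_local_lower_partition[OF ka0] by simp
  next
    fix p :: "nat list \<times> nat"
    assume "case p of (ka, m) \<Rightarrow> rsk_local d m ka mu nu rho"
    then obtain ka m where p: "p = (ka, m)" and local: "rsk_local d m ka mu nu rho"
      by (cases p) auto
    have "ka = ka0"
      using partition_eqI rsk_local_determined(1)[OF local] ka0 local
      unfolding rsk_local_def d_partition_def by metis
    then show "p = (ka0, entry)"
      using p rsk_local_determined(2)[OF local] by simp
  qed
qed

end
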